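(* Let $\mathcal A$ be a mixed online algorithm for an online problem $(\mathcal X,\mathcal R,d)$. Then there exist (1) a randomized algorithm $\mathcal A_1$ given as a probability distribution over deterministic online algorithms, (2) a behavioral online algorithm $\mathcal A_2$, and (3) a distributional online algorithm $\mathcal A_3$, all for the same problem, such that for every finite request sequence $\varrho$ the expected cost of $\mathcal A_1$ and of $\mathcal A_2$ on $\varrho$, and the cost of $\mathcal A_3$ on $\varrho$, are each at most $E(\mathrm{cost}_{\mathcal A}(\varrho))$.
   Context: Online problem: a set $\mathcal X$ of states (configurations), a set $\mathcal R$ of requests, a start state $s^0\in\mathcal X$, a function $d:\mathcal X\times\mathcal X\to[0,\infty)$ with $d(x,x)=0$ and $d(x,z)\le d(x,y)+d(y,z)$, and a cost function $\mathrm{cost}:\mathcal X\times\mathcal R\times\mathcal X\to[0,\infty)$ ($\mathrm{cost}(x,r,y)$ is the cost of serving request $r$ while moving from $x$ to $y$) satisfying $\mathrm{cost}(u,r,v)\le d(u,x)+\mathrm{cost}(x,r,y)+d(y,v)$ for all $u,x,y,v\in\mathcal X$, $r\in\mathcal R$. $\Pi$ denotes the set of finitely supported probability distributions on $\mathcal X$; a point mass at $x$ is identified with $x$. For $\pi,\pi'\in\Pi$ and $r\in\mathcal R$, $\mathrm{cost}(\pi,r,\pi')$ is the minimum transportation cost: the minimum of $\sum_{x,y}\gamma(x,y)\,\mathrm{cost}(x,r,y)$ over all probability distributions $\gamma$ on $\mathrm{supp}(\pi)\times\mathrm{supp}(\pi')$ whose first marginal is $\pi$ and second marginal is $\pi'$.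 Mixed online algorithm $\mathcal A$: a set $\mathcal M$ of memory states, a start memory state $m^0$, and for each full state $k=(\pi,m)\in\Pi\times\mathcal M$ (reachable by $\mathcal A$) and each request $r$, a finite list of "subsequent" full states $k_i=(\pi_i,m_i)$, $i=1,\dots,p$, with weights $\lambda_i>0$, $\sum_i\lambda_i=1$. Starting from $k^0=(s^0,m^0)$, on request $r^t$ the algorithm moves from $k^{t-1}$ to $k^t=k_i$ (the subsequents for $(k^{t-1},r^t)$) with probability $\lambda_i$. The cost of such a step is $\mathrm{cost}_{\mathcal A}(k,r)=\mathrm{cost}(\pi,r,\bar\pi)$ where $\bar\pi=\sum_i\lambda_i\pi_i$, and $\mathrm{cost}_{\mathcal A}(\varrho)=\sum_{t=1}^n\mathrm{cost}_{\mathcal A}(k^{t-1},r^t)$ (a random variable). Deterministic online algorithm: assigns to each finite request sequence $r^1\dots r^t$ a state $x^t$ depending only on $r^1,\dots,r^t$ (with $x^0=s^0$); its cost on $r^1\dots r^n$ is $\sum_t\mathrm{cost}(x^{t-1},r^t,x^t)$. A distribution over deterministic online algorithms is a random variable whose values are deterministic online algorithms; its cost is the expected cost. Behavioral online algorithm: a set $\mathcal M$ of memory states, a start memory $m^0$, and for each $(x,m)\in\mathcal X\times\mathcal M$ and $r\in\mathcal R$ a finitely supported probability distribution on $\mathcal X\times\mathcal M$; starting from $(s^0,m^0)$, on request $r^t$ it draws $(x^t,m^t)$ from the distribution associated with $(x^{t-1},m^{t-1},r^t)$; its cost is the random variable $\sum_t\mathrm{cost}(x^{t-1},r^t,x^t)$.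 Distributional online algorithm: a set $\mathcal M$ of memory states, a start memory $m^0$, and a deterministic map $(\pi,m,r)\mapsto(\pi',m')$ from $\Pi\times\mathcal M\times\mathcal R$ to $\Pi\times\mathcal M$; starting from $(s^0,m^0)$ it computes $(\pi^t,m^t)$ from $(\pi^{t-1},m^{t-1},r^t)$, and its cost is $\sum_t\mathrm{cost}(\pi^{t-1},r^t,\pi^t)$. *)

theory Defs
  imports "HOL-Probability.Probability"
begin

text \<open>States have type 'x, requests type 'r. The online problem consists of d and cost
  (the start state s0 is a separate parameter).\<close>

definition online_problem :: "('x \<Rightarrow> 'x \<Rightarrow> real) \<Rightarrow> ('x \<Rightarrow> 'r \<Rightarrow> 'x \<Rightarrow> real) \<Rightarrow> bool" where
  "online_problem d cost \<longleftrightarrow>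
     (\<forall>x y. d x y \<ge> 0) \<and> (\<forall>x. d x x = 0) \<and>
     (\<forall>x y z. d x z \<le> d x y + d y z) \<and>
     (\<forall>x r y. cost x r y \<ge> 0) \<and>
     (\<forall>u x y v r. cost u r v \<le> d u x + cost x r y + d y v)"

text \<open>Pi = finitely supported distributions: we use 'x pmf with finite support.
  Transportation cost between two distributions (minimum over couplings).\<close>

definition tcost :: "('x \<Rightarrow> 'r \<Rightarrow> 'x \<Rightarrow> real) \<Rightarrow> 'x pmf \<Rightarrow> 'r \<Rightarrow> 'x pmf \<Rightarrow> real" where
  "tcost cost \<pi> r \<pi>' = Inf {(\<Sum>(x,y)\<in>set_pmf \<pi> \<times> set_pmf \<pi>'. pmf \<gamma> (x,y) * cost x r y) | \<gamma>.
       map_pmf fst \<gamma> = \<pi> \<and> map_pmf snd \<gamma> = \<pi>'}"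

fun chain :: "('s \<Rightarrow> 'r \<Rightarrow> 's pmf) \<Rightarrow> 's \<Rightarrow> 'r list \<Rightarrow> 's list pmf" where
  "chain T s [] = return_pmf []"
| "chain T s (r # rs) = bind_pmf (T s r) (\<lambda>s'. map_pmf (Cons s') (chain T s' rs))"

fun path_cost :: "('s \<Rightarrow> 'r \<Rightarrow> 's \<Rightarrow> real) \<Rightarrow> 's \<Rightarrow> 'r list \<Rightarrow> 's list \<Rightarrow> real" where
  "path_cost c s (r # rs) (s' # ss) = c s r s' + path_cost c s' rs ss"
| "path_cost c s _ _ = 0"

text \<open>A full state is a pair (pi, m) :: 'x pmf \<times> 'm. For each full state and request the
  algorithm gives a finitely supported distribution over subsequent full states (the
  subsequents k_i with weights lambda_i).\<close>

inductive_set reachable :: "('k \<Rightarrow> 'r \<Rightarrow> 'k pmf) \<Rightarrow> 'k \<Rightarrow> 'k set"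
  for step :: "'k \<Rightarrow> 'r \<Rightarrow> 'k pmf" and k0 :: 'k where
  start_rule: "k0 \<in> reachable step k0"
| step_rule: "k \<in> reachable step k0 \<Longrightarrow> k' \<in> set_pmf (step k r) \<Longrightarrow> k' \<in> reachable step k0"

definition mixed_alg :: "'x \<Rightarrow> 'm \<Rightarrow> ('x pmf \<times> 'm \<Rightarrow> 'r \<Rightarrow> ('x pmf \<times> 'm) pmf) \<Rightarrow> bool" where
  "mixed_alg s0 m0 step \<longleftrightarrow>
     (\<forall>k \<in> reachable step (return_pmf s0, m0). \<forall>r.
        finite (set_pmf (step k r)) \<and> (\<forall>k' \<in> set_pmf (step k r). finite (set_pmf (fst k'))))"

text \<open>cost_A(k, r) = cost(pi, r, pibar) with pibar = sum_i lambda_i pi_i.\<close>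
definition mixed_step_cost ::
  "('x \<Rightarrow> 'r \<Rightarrow> 'x \<Rightarrow> real) \<Rightarrow> ('x pmf \<times> 'm \<Rightarrow> 'r \<Rightarrow> ('x pmf \<times> 'm) pmf) \<Rightarrow> 'x pmf \<times> 'm \<Rightarrow> 'r \<Rightarrow> real" where
  "mixed_step_cost cost step k r = tcost cost (fst k) r (bind_pmf (step k r) fst)"

definition mixed_exp_cost ::
  "('x \<Rightarrow> 'r \<Rightarrow> 'x \<Rightarrow> real) \<Rightarrow> 'x \<Rightarrow> 'm \<Rightarrow> ('x pmf \<times> 'm \<Rightarrow> 'r \<Rightarrow> ('x pmf \<times> 'm) pmf) \<Rightarrow> 'r list \<Rightarrow> real" where
  "mixed_exp_cost cost s0 m0 step \<rho> =
     measure_pmf.expectation (chain step (return_pmf s0, m0) \<rho>)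
       (path_cost (\<lambda>k r k'. mixed_step_cost cost step k r) (return_pmf s0, m0) \<rho>)"

definition det_alg :: "'x \<Rightarrow> ('r list \<Rightarrow> 'x) \<Rightarrow> bool" where
  "det_alg s0 A \<longleftrightarrow> A [] = s0"

definition det_cost :: "('x \<Rightarrow> 'r \<Rightarrow> 'x \<Rightarrow> real) \<Rightarrow> ('r list \<Rightarrow> 'x) \<Rightarrow> 'r list \<Rightarrow> real" where
  "det_cost cost A \<rho> = (\<Sum>t<length \<rho>. cost (A (take t \<rho>)) (\<rho> ! t) (A (take (Suc t) \<rho>)))"

definition behavioral_alg :: "('x \<times> 'mm \<Rightarrow> 'r \<Rightarrow> ('x \<times> 'mm) pmf) \<Rightarrow> bool" where
  "behavioral_alg T \<longleftrightarrow> (\<forall>s r. finite (set_pmf (T s r)))"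

definition beh_exp_cost ::
  "('x \<Rightarrow> 'r \<Rightarrow> 'x \<Rightarrow> real) \<Rightarrow> 'x \<Rightarrow> 'mm \<Rightarrow> ('x \<times> 'mm \<Rightarrow> 'r \<Rightarrow> ('x \<times> 'mm) pmf) \<Rightarrow> 'r list \<Rightarrow> real" where
  "beh_exp_cost cost s0 m0 T \<rho> =
     measure_pmf.expectation (chain T (s0, m0) \<rho>)
       (path_cost (\<lambda>s r s'. cost (fst s) r (fst s')) (s0, m0) \<rho>)"

definition distributional_alg :: "('x pmf \<times> 'mm \<Rightarrow> 'r \<Rightarrow> 'x pmf \<times> 'mm) \<Rightarrow> bool" where
  "distributional_alg F \<longleftrightarrow>
     (\<forall>\<pi> m r. finite (set_pmf \<pi>) \<longrightarrow> finite (set_pmf (fst (F (\<pi>, m) r))))"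

fun drun :: "('k \<Rightarrow> 'r \<Rightarrow> 'k) \<Rightarrow> 'k \<Rightarrow> 'r list \<Rightarrow> 'k list" where
  "drun F k [] = []"
| "drun F k (r # rs) = F k r # drun F (F k r) rs"

definition dist_cost ::
  "('x \<Rightarrow> 'r \<Rightarrow> 'x \<Rightarrow> real) \<Rightarrow> 'x \<Rightarrow> 'mm \<Rightarrow> ('x pmf \<times> 'mm \<Rightarrow> 'r \<Rightarrow> 'x pmf \<times> 'mm) \<Rightarrow> 'r list \<Rightarrow> real" where
  "dist_cost cost s0 m0 F \<rho> =
     path_cost (\<lambda>k r k'. tcost cost (fst k) r (fst k')) (return_pmf s0, m0) \<rho>
       (drun F (return_pmf s0, m0) \<rho>)"

end

theory Submission
  imports Defs
begin

(*
  Run the mixed algorithm "in distribution": remember the law \<mu> of its current full state, so that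
  its position is distributed as the mixture bind_pmf \<mu> fst. Moving this mixture by an optimal
  transport plan costs at most the expected cost of the mixed algorithm, because transportation cost
  is convex under mixing: gluing optimal plans for the individual full states yields a plan for the
  mixtures. This is the distributional algorithm. The behavioral algorithm moves an actual position
  according to the conditional law of such an optimal plan; its position stays distributed as the
  mixture, so its expected cost is the same. Finally, a behavioral algorithm with finitely supported
  transitions is a random deterministic algorithm driven by a single uniform seed v in [0,1): each
  step chooses the subinterval of [0,1) that contains v and rescales v, which is again uniform.
*)

section \<open>Expectations over finitely supported distributions\<close>

lemma expectation_bind_pmf:
  fixes h :: "'b \<Rightarrow> real"
  assumes "finite (set_pmf p)" "\<And>x. x \<in> set_pmf p \<Longrightarrow> finite (set_pmf (f x))"
  shows "measure_pmf.expectation (bind_pmf p f) h =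
         measure_pmf.expectation p (\<lambda>x. measure_pmf.expectation (f x) h)"
  using pmf_expectation_bind[of "set_pmf p" f p h] assms
  by (simp add: integral_measure_pmf_real[OF assms(1)] mult.commute)

lemma expectation_cong_pmf:
  fixes f g :: "'a \<Rightarrow> real"
  shows "(\<And>x. x \<in> set_pmf p \<Longrightarrow> f x = g x) \<Longrightarrow>
    measure_pmf.expectation p f = measure_pmf.expectation p g"
  by (intro integral_cong_AE) (auto simp: AE_measure_pmf_iff)

lemma expectation_disintegrate_fst:
  fixes f :: "'a \<Rightarrow> 'b \<Rightarrow> real"
  assumes fin: "finite (set_pmf \<gamma>)"
  shows "measure_pmf.expectation \<gamma> (\<lambda>p. f (fst p) (snd p)) =
    measure_pmf.expectation (map_pmf fst \<gamma>)
      (\<lambda>x. measure_pmf.expectation (map_pmf snd (cond_pmf \<gamma> {p. fst p = x})) (f x))"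
proof -
  let ?cond = "\<lambda>x. cond_pmf \<gamma> {p. fst p = x}"
  have ne: "set_pmf \<gamma> \<inter> {p. fst p = x} \<noteq> {}" if "x \<in> set_pmf (map_pmf fst \<gamma>)" for x
    using that by auto
  have "measure_pmf.expectation \<gamma> (\<lambda>p. f (fst p) (snd p)) =
      measure_pmf.expectation (bind_pmf (map_pmf fst \<gamma>) ?cond) (\<lambda>p. f (fst p) (snd p))"
    by (subst bind_cond_pmf_cancel) (auto simp: vimage_def)
  also have "\<dots> = measure_pmf.expectation (map_pmf fst \<gamma>)
      (\<lambda>x. measure_pmf.expectation (?cond x) (\<lambda>p. f (fst p) (snd p)))"
    using fin set_cond_pmf[OF ne] by (intro expectation_bind_pmf) auto
  also have "\<dots> = measure_pmf.expectation (map_pmf fst \<gamma>)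
      (\<lambda>x. measure_pmf.expectation (map_pmf snd (?cond x)) (f x))"
  proof (rule expectation_cong_pmf)
    fix x assume x: "x \<in> set_pmf (map_pmf fst \<gamma>)"
    have "measure_pmf.expectation (?cond x) (\<lambda>p. f (fst p) (snd p)) =
        measure_pmf.expectation (?cond x) (\<lambda>p. f x (snd p))"
      using set_cond_pmf[OF ne[OF x]] by (intro expectation_cong_pmf) auto
    then show "measure_pmf.expectation (?cond x) (\<lambda>p. f (fst p) (snd p)) =
        measure_pmf.expectation (map_pmf snd (?cond x)) (f x)"
      by simp
  qed
  finally show ?thesis .
qed

lemma finite_set_pmf_chain:
  assumes "s \<in> S" "\<And>s r. s \<in> S \<Longrightarrow> finite (set_pmf (T s r))"
    and "\<And>s r s'. s \<in> S \<Longrightarrow> s' \<in> set_pmf (T s r) \<Longrightarrow> s' \<in> S"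
  shows "finite (set_pmf (chain T s \<rho>))"
  using assms(1) by (induction \<rho> arbitrary: s) (auto simp: assms(2,3))

lemma expectation_path_cost_chain_Cons:
  fixes c :: "'s \<Rightarrow> 'r \<Rightarrow> 's \<Rightarrow> real"
  assumes "finite (set_pmf (T s r))"
    and "\<And>s'. s' \<in> set_pmf (T s r) \<Longrightarrow> finite (set_pmf (chain T s' rs))"
  shows "measure_pmf.expectation (chain T s (r # rs)) (path_cost c s (r # rs)) =
    measure_pmf.expectation (T s r)
      (\<lambda>s'. c s r s' + measure_pmf.expectation (chain T s' rs) (path_cost c s' rs))"
proof -
  have "measure_pmf.expectation (chain T s (r # rs)) (path_cost c s (r # rs)) =
    measure_pmf.expectation (T s r) (\<lambda>s'.
      measure_pmf.expectation (map_pmf (Cons s') (chain T s' rs)) (path_cost c s (r # rs)))"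
    using assms by (simp add: expectation_bind_pmf)
  also have "\<dots> = measure_pmf.expectation (T s r)
      (\<lambda>s'. c s r s' + measure_pmf.expectation (chain T s' rs) (path_cost c s' rs))"
    using assms(2) by (intro expectation_cong_pmf) (simp add: integrable_measure_pmf_finite)
  finally show ?thesis .
qed

section \<open>Couplings and transportation cost\<close>

definition coupling :: "('a \<times> 'b) pmf \<Rightarrow> 'a pmf \<Rightarrow> 'b pmf \<Rightarrow> bool" where
  "coupling \<gamma> p q \<longleftrightarrow> map_pmf fst \<gamma> = p \<and> map_pmf snd \<gamma> = q"

lemma coupling_pair_pmf: "coupling (pair_pmf p q) p q"
  by (simp add: coupling_def map_fst_pair_pmf map_snd_pair_pmf)

lemma set_pmf_coupling_subset: "coupling \<gamma> p q \<Longrightarrow> set_pmf \<gamma> \<subseteq> set_pmf p \<times> set_pmf q"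
  unfolding coupling_def by force

lemma pmf_map_fst_eq_sum:
  assumes "set_pmf \<gamma> \<subseteq> A \<times> B" "finite B"
  shows "pmf (map_pmf fst \<gamma>) x = (\<Sum>y\<in>B. pmf \<gamma> (x, y))"
proof -
  have "pmf (map_pmf fst \<gamma>) x = measure_pmf.prob \<gamma> (fst -` {x} \<inter> set_pmf \<gamma>)"
    by (simp add: pmf_map measure_Int_set_pmf)
  also have "fst -` {x} \<inter> set_pmf \<gamma> = (Pair x ` B) \<inter> set_pmf \<gamma>"
    using assms(1) by auto
  also have "measure_pmf.prob \<gamma> \<dots> = (\<Sum>y\<in>B. pmf \<gamma> (x, y))"
    using assms(2)
    by (simp add: measure_Int_set_pmf measure_measure_pmf_finite sum.reindex inj_on_def)
  finally show ?thesis .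
qed

lemma pmf_map_snd_eq_sum:
  assumes "set_pmf \<gamma> \<subseteq> A \<times> B" "finite A"
  shows "pmf (map_pmf snd \<gamma>) y = (\<Sum>x\<in>A. pmf \<gamma> (x, y))"
proof -
  have "pmf (map_pmf snd \<gamma>) y = measure_pmf.prob \<gamma> (snd -` {y} \<inter> set_pmf \<gamma>)"
    by (simp add: pmf_map measure_Int_set_pmf)
  also have "snd -` {y} \<inter> set_pmf \<gamma> = ((\<lambda>x. (x, y)) ` A) \<inter> set_pmf \<gamma>"
    using assms(1) by auto
  also have "measure_pmf.prob \<gamma> \<dots> = (\<Sum>x\<in>A. pmf \<gamma> (x, y))"
    using assms(2)
    by (simp add: measure_Int_set_pmf measure_measure_pmf_finite sum.reindex inj_on_def)
  finally show ?thesis .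
qed

lemma expectation_coupling_eq_sum:
  fixes f :: "'a \<times> 'b \<Rightarrow> real"
  assumes "coupling \<gamma> p q" "finite (set_pmf p)" "finite (set_pmf q)"
  shows "measure_pmf.expectation \<gamma> f = (\<Sum>i\<in>set_pmf p \<times> set_pmf q. pmf \<gamma> i * f i)"
  using set_pmf_coupling_subset[OF assms(1)] assms(2,3)
  by (subst integral_measure_pmf_real) (auto simp: mult.commute)

text \<open>The mass functions of the couplings of p and q, as a subset of the space of all functions
  with the product topology, where compactness is available.\<close>

definition coupling_weights :: "'a pmf \<Rightarrow> 'b pmf \<Rightarrow> ('a \<times> 'b \<Rightarrow> real) set" where
  "coupling_weights p q = {h.
     (\<forall>i. 0 \<le> h i \<and> h i \<le> 1) \<and> (\<forall>i. i \<notin> set_pmf p \<times> set_pmf q \<longrightarrow> h i = 0) \<and>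
     (\<forall>x\<in>set_pmf p. (\<Sum>y\<in>set_pmf q. h (x, y)) = pmf p x) \<and>
     (\<forall>y\<in>set_pmf q. (\<Sum>x\<in>set_pmf p. h (x, y)) = pmf q y)}"

lemma compact_coupling_weights:
  assumes "finite (set_pmf p)" "finite (set_pmf q)"
  shows "compact (coupling_weights p q)"
proof -
  define B where "B i = (if i \<in> set_pmf p \<times> set_pmf q then {0..1} else {0::real})" for i
  have "compactin (product_topology (\<lambda>_. euclidean) UNIV) (Pi\<^sub>E UNIV B)"
    unfolding compactin_PiE by (simp add: B_def)
  then have "compact (Pi\<^sub>E UNIV B)"
    by (simp add: euclidean_product_topology)
  moreover have "closed {h. \<forall>x\<in>set_pmf p. (\<Sum>y\<in>set_pmf q. h (x, y)) = pmf p x}"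
    unfolding Ball_def
    by (intro closed_Collect_all closed_Collect_imp open_Collect_const closed_Collect_eq
        continuous_intros continuous_on_product_then_coordinatewise continuous_on_id)
  moreover have "closed {h. \<forall>y\<in>set_pmf q. (\<Sum>x\<in>set_pmf p. h (x, y)) = pmf q y}"
    unfolding Ball_def
    by (intro closed_Collect_all closed_Collect_imp open_Collect_const closed_Collect_eq
        continuous_intros continuous_on_product_then_coordinatewise continuous_on_id)
  ultimately have "compact (Pi\<^sub>E UNIV B \<inter>
      {h. \<forall>x\<in>set_pmf p. (\<Sum>y\<in>set_pmf q. h (x, y)) = pmf p x} \<inter>
      {h. \<forall>y\<in>set_pmf q. (\<Sum>x\<in>set_pmf p. h (x, y)) = pmf q y})"
    by (intro compact_Int_closed)
  also have "\<dots> = coupling_weights p q"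
  proof -
    have "h i \<in> B i \<longleftrightarrow> 0 \<le> h i \<and> h i \<le> 1 \<and> (i \<notin> set_pmf p \<times> set_pmf q \<longrightarrow> h i = 0)" for h i
      by (auto simp: B_def)
    then show ?thesis
      unfolding coupling_weights_def PiE_UNIV_domain by (auto simp: Pi_iff)
  qed
  finally show ?thesis .
qed

lemma pmf_coupling_in_coupling_weights:
  assumes "coupling \<gamma> p q" "finite (set_pmf p)" "finite (set_pmf q)"
  shows "pmf \<gamma> \<in> coupling_weights p q"
  using set_pmf_coupling_subset[OF assms(1)] assms
    pmf_map_fst_eq_sum[of \<gamma> "set_pmf p" "set_pmf q"]
    pmf_map_snd_eq_sum[of \<gamma> "set_pmf p" "set_pmf q"]
  by (auto simp: coupling_weights_def coupling_def pmf_le_1 pmf_eq_0_set_pmf)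

lemma coupling_embed_pmf:
  assumes h: "h \<in> coupling_weights p q" and fin: "finite (set_pmf p)" "finite (set_pmf q)"
  shows "coupling (embed_pmf h) p q" "pmf (embed_pmf h) = h"
proof -
  let ?I = "set_pmf p \<times> set_pmf q"
  have nonneg: "0 \<le> h i" and zero: "i \<notin> ?I \<Longrightarrow> h i = 0" for i
    using h unfolding coupling_weights_def by blast+
  have "sum h ?I = (\<Sum>x\<in>set_pmf p. \<Sum>y\<in>set_pmf q. h (x, y))"
    by (simp add: sum.cartesian_product)
  also have "\<dots> = (\<Sum>x\<in>set_pmf p. pmf p x)"
    using h by (simp add: coupling_weights_def)
  also have "\<dots> = 1"
    using fin by (simp add: sum_pmf_eq_1)
  finally have "(\<integral>\<^sup>+i. ennreal (h i) \<partial>count_space UNIV) = 1"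
    using fin zero nonneg by (subst nn_integral_count_space'[of ?I]) auto
  then show pmf_eq: "pmf (embed_pmf h) = h"
    using nonneg by (intro ext pmf_embed_pmf)
  have supp: "set_pmf (embed_pmf h) \<subseteq> ?I"
    using zero by (auto simp: set_pmf_eq pmf_eq)
  show "coupling (embed_pmf h) p q"
    unfolding coupling_def
  proof (intro conjI pmf_eqI)
    show "pmf (map_pmf fst (embed_pmf h)) x = pmf p x" for x
      using h zero pmf_map_fst_eq_sum[OF supp fin(2)]
      by (cases "x \<in> set_pmf p") (auto simp: coupling_weights_def pmf_eq pmf_eq_0_set_pmf)
    show "pmf (map_pmf snd (embed_pmf h)) y = pmf q y" for y
      using h zero pmf_map_snd_eq_sum[OF supp fin(1)]
      by (cases "y \<in> set_pmf q") (auto simp: coupling_weights_def pmf_eq pmf_eq_0_set_pmf)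
  qed
qed

lemma exists_optimal_coupling:
  fixes c :: "'a \<times> 'b \<Rightarrow> real"
  assumes fin: "finite (set_pmf p)" "finite (set_pmf q)"
  shows "\<exists>\<gamma>. coupling \<gamma> p q \<and>
    (\<forall>\<gamma>'. coupling \<gamma>' p q \<longrightarrow> measure_pmf.expectation \<gamma> c \<le> measure_pmf.expectation \<gamma>' c)"
proof -
  let ?I = "set_pmf p \<times> set_pmf q"
  have "continuous_on (coupling_weights p q) (\<lambda>h. \<Sum>i\<in>?I. h i * c i)"
    by (intro continuous_intros continuous_on_product_then_coordinatewise continuous_on_id)
  moreover have "coupling_weights p q \<noteq> {}"
    using pmf_coupling_in_coupling_weights[OF coupling_pair_pmf fin] by blast
  ultimately obtain h where h: "h \<in> coupling_weights p q"
    and min: "\<And>h'. h' \<in> coupling_weights p q \<Longrightarrow> (\<Sum>i\<in>?I. h i * c i) \<le> (\<Sum>i\<in>?I. h' i * c i)"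
    using continuous_attains_inf[OF compact_coupling_weights[OF fin]] by blast
  show ?thesis
  proof (intro exI conjI allI impI)
    show "coupling (embed_pmf h) p q"
      by (rule coupling_embed_pmf[OF h fin])
    fix \<gamma>' assume "coupling \<gamma>' p q"
    then show "measure_pmf.expectation (embed_pmf h) c \<le> measure_pmf.expectation \<gamma>' c"
      using min[OF pmf_coupling_in_coupling_weights[OF _ fin]] coupling_embed_pmf[OF h fin]
      by (simp add: expectation_coupling_eq_sum fin)
  qed
qed

lemma tcost_eq_Inf_expectation:
  assumes "finite (set_pmf p)" "finite (set_pmf q)"
  shows "tcost cost p r q =
    Inf {measure_pmf.expectation \<gamma> (\<lambda>(x, y). cost x r y) | \<gamma>. coupling \<gamma> p q}"
proof -
  have eq: "(\<Sum>(x, y)\<in>set_pmf p \<times> set_pmf q. pmf \<gamma> (x, y) * cost x r y) =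
      measure_pmf.expectation \<gamma> (\<lambda>(x, y). cost x r y)" if "coupling \<gamma> p q" for \<gamma>
    by (simp add: expectation_coupling_eq_sum[OF that assms] case_prod_beta)
  show ?thesis
    unfolding tcost_def coupling_def[symmetric] image_Collect[symmetric]
    by (intro arg_cong[where f = Inf] image_cong) (auto simp: eq)
qed

lemma tcost_optimal_coupling:
  assumes "finite (set_pmf p)" "finite (set_pmf q)"
  shows "\<exists>\<gamma>. coupling \<gamma> p q \<and> measure_pmf.expectation \<gamma> (\<lambda>(x, y). cost x r y) = tcost cost p r q \<and>
    (\<forall>\<gamma>'. coupling \<gamma>' p q \<longrightarrow> tcost cost p r q \<le> measure_pmf.expectation \<gamma>' (\<lambda>(x, y). cost x r y))"
proof -
  obtain \<gamma> where \<gamma>: "coupling \<gamma> p q" and min: "\<forall>\<gamma>'. coupling \<gamma>' p q \<longrightarrow>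
      measure_pmf.expectation \<gamma> (\<lambda>(x, y). cost x r y) \<le>
      measure_pmf.expectation \<gamma>' (\<lambda>(x, y). cost x r y)"
    using exists_optimal_coupling[OF assms, of "\<lambda>(x, y). cost x r y"] by blast
  have "tcost cost p r q = measure_pmf.expectation \<gamma> (\<lambda>(x, y). cost x r y)"
    unfolding tcost_eq_Inf_expectation[OF assms] using \<gamma> min by (intro cInf_eq_minimum) auto
  with \<gamma> min show ?thesis by auto
qed

lemma tcost_le_expectation:
  assumes "coupling \<gamma> p q" "finite (set_pmf p)" "finite (set_pmf q)"
  shows "tcost cost p r q \<le> measure_pmf.expectation \<gamma> (\<lambda>(x, y). cost x r y)"
  using tcost_optimal_coupling[OF assms(2,3), of cost r] assms(1) by blast

lemma exists_coupling_attaining_tcost: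
  assumes "finite (set_pmf p)" "finite (set_pmf q)"
  shows "\<exists>\<gamma>. coupling \<gamma> p q \<and> measure_pmf.expectation \<gamma> (\<lambda>(x, y). cost x r y) = tcost cost p r q"
  using tcost_optimal_coupling[OF assms, of cost r] by blast

lemma tcost_bind_pmf_le:
  assumes \<mu>: "finite (set_pmf \<mu>)"
    and f: "\<And>k. k \<in> set_pmf \<mu> \<Longrightarrow> finite (set_pmf (f k))"
    and g: "\<And>k. k \<in> set_pmf \<mu> \<Longrightarrow> finite (set_pmf (g k))"
  shows "tcost cost (bind_pmf \<mu> f) r (bind_pmf \<mu> g) \<le>
    measure_pmf.expectation \<mu> (\<lambda>k. tcost cost (f k) r (g k))"
proof -
  let ?c = "\<lambda>(x, y). cost x r y"
  have "\<forall>k\<in>set_pmf \<mu>. \<exists>\<gamma>. coupling \<gamma> (f k) (g k) \<and>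
      measure_pmf.expectation \<gamma> ?c = tcost cost (f k) r (g k)"
    using exists_coupling_attaining_tcost[OF f g, where cost = cost and r = r] by blast
  then obtain \<gamma> where \<gamma>: "\<And>k. k \<in> set_pmf \<mu> \<Longrightarrow> coupling (\<gamma> k) (f k) (g k)"
    and opt: "\<And>k. k \<in> set_pmf \<mu> \<Longrightarrow> measure_pmf.expectation (\<gamma> k) ?c = tcost cost (f k) r (g k)"
    by metis
  have fin_\<gamma>: "finite (set_pmf (\<gamma> k))" if "k \<in> set_pmf \<mu>" for k
    using set_pmf_coupling_subset[OF \<gamma>[OF that]] f[OF that] g[OF that] finite_subset by blast
  have "coupling (bind_pmf \<mu> \<gamma>) (bind_pmf \<mu> f) (bind_pmf \<mu> g)"
    using \<gamma> unfolding coupling_def map_bind_pmf by (auto intro: bind_pmf_cong)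
  moreover have "finite (set_pmf (bind_pmf \<mu> f))" "finite (set_pmf (bind_pmf \<mu> g))"
    using \<mu> f g by auto
  ultimately have "tcost cost (bind_pmf \<mu> f) r (bind_pmf \<mu> g) \<le>
      measure_pmf.expectation (bind_pmf \<mu> \<gamma>) ?c"
    by (rule tcost_le_expectation)
  also have "\<dots> = measure_pmf.expectation \<mu> (\<lambda>k. measure_pmf.expectation (\<gamma> k) ?c)"
    by (rule expectation_bind_pmf[OF \<mu> fin_\<gamma>])
  also have "\<dots> = measure_pmf.expectation \<mu> (\<lambda>k. tcost cost (f k) r (g k))"
    by (rule expectation_cong_pmf) (rule opt)
  finally show ?thesis .
qed

section \<open>Behavioral algorithms as random deterministic algorithms\<close>

definition uniform01 :: "real measure" where
  "uniform01 = restrict_space lborel {0..<1}"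

lemma prob_space_uniform01: "prob_space uniform01"
  unfolding uniform01_def by (rule prob_space_restrict_space) auto

lemma has_bochner_integral_uniform01_iff:
  fixes f :: "real \<Rightarrow> real"
  shows "has_bochner_integral uniform01 f i \<longleftrightarrow>
     has_bochner_integral lborel (\<lambda>v. indicator {0..<1} v * f v) i"
  unfolding uniform01_def by (subst has_bochner_integral_restrict_space) auto

lemma has_bochner_integral_uniform01_const: "has_bochner_integral uniform01 (\<lambda>_. c) (c :: real)"
proof -
  have "has_bochner_integral lborel (\<lambda>v. c * indicator {0..<1::real} v)
      (c * measure lborel {0..<1::real})"
    by (intro has_bochner_integral_mult_right has_bochner_integral_real_indicator) auto
  then show ?thesis
    by (simp add: has_bochner_integral_uniform01_iff mult.commute)
qed

text \<open>The interval [c, c + sum w) is cut into consecutive pieces of lengths w x. pick returns the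
  piece containing v together with the relative position of v inside it, which is uniformly
  distributed on [0,1) again when v is uniform.\<close>

fun pick :: "('a \<Rightarrow> real) \<Rightarrow> real \<Rightarrow> 'a list \<Rightarrow> real \<Rightarrow> 'a \<times> real" where
  "pick w c [] v = (undefined, 0)"
| "pick w c (x # xs) v = (if v < c + w x then (x, (v - c) / w x) else pick w (c + w x) xs v)"

lemma has_bochner_integral_pick:
  fixes H :: "'a \<times> real \<Rightarrow> real"
  assumes "\<And>x. x \<in> set xs \<Longrightarrow> 0 < w x"
    and "\<And>x. x \<in> set xs \<Longrightarrow> has_bochner_integral uniform01 (\<lambda>u. H (x, u)) (I x)"
  shows "has_bochner_integral lborel
    (\<lambda>v. indicator {c..<c + sum_list (map w xs)} v * H (pick w c xs v)) (\<Sum>x\<leftarrow>xs. w x * I x)"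
  using assms
proof (induction xs arbitrary: c)
  case Nil
  then show ?case by (simp add: has_bochner_integral_zero)
next
  case (Cons x xs)
  define a where "a = w x"
  define S where "S = sum_list (map w xs)"
  have "0 < a" using Cons.prems(1) by (simp add: a_def)
  have "0 \<le> S"
    unfolding S_def using Cons.prems(1) by (intro sum_list_nonneg) (auto intro: less_imp_le)
  define f where "f v = indicator {c..<c + a} v * H (x, (v - c) / a)" for v
  have "has_bochner_integral lborel (\<lambda>u. f (c + a * u)) (I x)"
  proof -
    have "indicator {c..<c + a} (c + a * u) = (indicator {0..<1} u :: real)" for u
      using \<open>0 < a\<close> by (auto simp: indicator_def mult_less_cancel_left1 zero_le_mult_iff)
    then show ?thesis
      using Cons.prems(2)[of x] \<open>0 < a\<close> by (simp add: f_def has_bochner_integral_uniform01_iff)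
  qed
  then have "has_bochner_integral lborel f (a * I x)"
    using lborel_has_bochner_integral_real_affine_iff[of a f "a * I x" c] \<open>0 < a\<close>
    by (simp add: field_simps)
  moreover have "has_bochner_integral lborel
      (\<lambda>v. indicator {c + a..<c + a + S} v * H (pick w (c + a) xs v)) (\<Sum>x\<leftarrow>xs. w x * I x)"
    unfolding S_def using Cons by simp
  ultimately have "has_bochner_integral lborel
      (\<lambda>v. f v + indicator {c + a..<c + a + S} v * H (pick w (c + a) xs v)) (\<Sum>x\<leftarrow>x # xs. w x * I x)"
    by (simp add: a_def has_bochner_integral_add)
  moreover have "indicator {c..<c + sum_list (map w (x # xs))} v * H (pick w c (x # xs) v) =
      f v + indicator {c + a..<c + a + S} v * H (pick w (c + a) xs v)" for v
    using \<open>0 < a\<close> \<open>0 \<le> S\<close> by (auto simp: f_def a_def S_def indicator_def)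
  ultimately show ?case by simp
qed

definition enum_pmf :: "'a pmf \<Rightarrow> 'a list" where
  "enum_pmf p = (SOME xs. set xs = set_pmf p \<and> distinct xs)"

lemma enum_pmf:
  assumes "finite (set_pmf p)"
  shows "set (enum_pmf p) = set_pmf p" "distinct (enum_pmf p)"
  using someI_ex[OF finite_distinct_list[OF assms]] unfolding enum_pmf_def by auto

definition split_uniform :: "'a pmf \<Rightarrow> real \<Rightarrow> 'a \<times> real" where
  "split_uniform p = pick (pmf p) 0 (enum_pmf p)"

lemma has_bochner_integral_split_uniform:
  fixes H :: "'a \<times> real \<Rightarrow> real"
  assumes fin: "finite (set_pmf p)"
    and H: "\<And>x. x \<in> set_pmf p \<Longrightarrow> has_bochner_integral uniform01 (\<lambda>u. H (x, u)) (I x)"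
  shows "has_bochner_integral uniform01 (\<lambda>v. H (split_uniform p v)) (measure_pmf.expectation p I)"
proof -
  have sum_enum: "(\<Sum>x\<leftarrow>enum_pmf p. f x) = (\<Sum>x\<in>set_pmf p. f x)" for f :: "'a \<Rightarrow> real"
    using enum_pmf[OF fin] by (simp add: sum_list_distinct_conv_sum_set)
  have "has_bochner_integral lborel
      (\<lambda>v. indicator {0..<0 + sum_list (map (pmf p) (enum_pmf p))} v * H (split_uniform p v))
      (\<Sum>x\<leftarrow>enum_pmf p. pmf p x * I x)"
    unfolding split_uniform_def using enum_pmf[OF fin] H
    by (intro has_bochner_integral_pick) (auto simp: pmf_positive)
  moreover have "sum_list (map (pmf p) (enum_pmf p)) = 1"
    using sum_enum fin by (simp add: sum_pmf_eq_1)
  moreover have "(\<Sum>x\<leftarrow>enum_pmf p. pmf p x * I x) = measure_pmf.expectation p I"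
    using fin by (simp add: sum_enum integral_measure_pmf_real mult.commute)
  ultimately show ?thesis
    by (simp add: has_bochner_integral_uniform01_iff)
qed

lemma beh_exp_cost_Cons:
  assumes "behavioral_alg T"
  shows "beh_exp_cost cost x m T (r # rs) = measure_pmf.expectation (T (x, m) r)
    (\<lambda>s'. cost x r (fst s') + beh_exp_cost cost (fst s') (snd s') T rs)"
  using assms unfolding beh_exp_cost_def behavioral_alg_def
  by (subst expectation_path_cost_chain_Cons) (auto intro: finite_set_pmf_chain[where S = UNIV])

fun seed_run :: "('s \<Rightarrow> 'r \<Rightarrow> 's pmf) \<Rightarrow> 's \<Rightarrow> real \<Rightarrow> 'r list \<Rightarrow> 's" where
  "seed_run T s v [] = s"
| "seed_run T s v (r # rs) =
     seed_run T (fst (split_uniform (T s r) v)) (snd (split_uniform (T s r) v)) rs"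

definition seed_alg :: "('x \<times> 'mm \<Rightarrow> 'r \<Rightarrow> ('x \<times> 'mm) pmf) \<Rightarrow> 'x \<times> 'mm \<Rightarrow> real \<Rightarrow> 'r list \<Rightarrow> 'x" where
  "seed_alg T s v = (\<lambda>\<sigma>. fst (seed_run T s v \<sigma>))"

lemma det_cost_Cons:
  "det_cost cost A (r # rs) = cost (A []) r (A [r]) + det_cost cost (\<lambda>\<sigma>. A (r # \<sigma>)) rs"
  unfolding det_cost_def by (simp add: sum.lessThan_Suc_shift del: sum.lessThan_Suc)

lemma has_bochner_integral_det_cost_seed_alg:
  assumes T: "behavioral_alg T"
  shows "has_bochner_integral uniform01 (\<lambda>v. det_cost cost (seed_alg T (x, m) v) \<rho>)
    (beh_exp_cost cost x m T \<rho>)"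
proof (induction \<rho> arbitrary: x m)
  case Nil
  then show ?case
    by (simp add: det_cost_def beh_exp_cost_def has_bochner_integral_zero)
next
  case (Cons r rs)
  define H where "H = (\<lambda>(s', u). cost x r (fst s') + det_cost cost (seed_alg T s' u) rs)"
  have "has_bochner_integral uniform01 (\<lambda>v. H (split_uniform (T (x, m) r) v))
      (measure_pmf.expectation (T (x, m) r)
        (\<lambda>s'. cost x r (fst s') + beh_exp_cost cost (fst s') (snd s') T rs))"
    using T has_bochner_integral_add[OF has_bochner_integral_uniform01_const Cons.IH]
    unfolding behavioral_alg_def H_def by (intro has_bochner_integral_split_uniform) auto
  moreover have "det_cost cost (seed_alg T (x, m) v) (r # rs) = H (split_uniform (T (x, m) r) v)"
    for v
    by (simp add: det_cost_Cons H_def seed_alg_def case_prod_beta)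
  ultimately show ?case
    using beh_exp_cost_Cons[OF T] by simp
qed

lemma exists_finest_measurable_image:
  assumes "G \<in> space \<Omega> \<rightarrow> D"
  obtains N where "space N = D" "G \<in> \<Omega> \<rightarrow>\<^sub>M N"
    "\<And>f :: _ \<Rightarrow> real. (\<lambda>\<omega>. f (G \<omega>)) \<in> borel_measurable \<Omega> \<Longrightarrow> f \<in> borel_measurable N"
proof
  define A where "A = {B. B \<subseteq> D \<and> G -` B \<inter> space \<Omega> \<in> sets \<Omega>}"
  define N where "N = measure_of D A (\<lambda>_. 0)"
  have "A \<subseteq> Pow D" unfolding A_def by auto
  then have sets_N: "A \<subseteq> sets N" and space_N: "space N = D"
    unfolding N_def by (auto simp: space_measure_of_conv)
  show "space N = D" by (fact space_N)
  show "G \<in> \<Omega> \<rightarrow>\<^sub>M N"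
    unfolding N_def using \<open>A \<subseteq> Pow D\<close> assms by (rule measurable_measure_of) (auto simp: A_def)
  fix f :: "_ \<Rightarrow> real" assume f: "(\<lambda>\<omega>. f (G \<omega>)) \<in> borel_measurable \<Omega>"
  show "f \<in> borel_measurable N"
  proof (rule measurableI)
    fix B :: "real set" assume "B \<in> sets borel"
    then have "(\<lambda>\<omega>. f (G \<omega>)) -` B \<inter> space \<Omega> \<in> sets \<Omega>"
      by (rule measurable_sets[OF f])
    moreover have "G -` (f -` B \<inter> D) \<inter> space \<Omega> = (\<lambda>\<omega>. f (G \<omega>)) -` B \<inter> space \<Omega>"
      using assms by auto
    ultimately show "f -` B \<inter> space N \<in> sets N"
      using sets_N unfolding space_N A_def by auto
  qed simp
qed

theorem behavioral_alg_as_random_det_alg: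
  fixes T :: "'x \<times> 'mm \<Rightarrow> 'r \<Rightarrow> ('x \<times> 'mm) pmf"
  assumes T: "behavioral_alg T"
  shows "\<exists>M :: ('r list \<Rightarrow> 'x) measure. prob_space M \<and> (\<forall>A \<in> space M. det_alg x0 A) \<and>
    (\<forall>\<rho>. has_bochner_integral M (\<lambda>A. det_cost cost A \<rho>) (beh_exp_cost cost x0 m0 T \<rho>))"
proof -
  let ?G = "seed_alg T (x0, m0)"
  have "?G \<in> space uniform01 \<rightarrow> {A. det_alg x0 A}"
    by (simp add: seed_alg_def det_alg_def)
  then obtain N where N: "space N = {A. det_alg x0 A}" "?G \<in> uniform01 \<rightarrow>\<^sub>M N"
    and meas: "\<And>f :: _ \<Rightarrow> real. (\<lambda>v. f (?G v)) \<in> borel_measurable uniform01 \<Longrightarrow> f \<in> borel_measurable N"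
    using exists_finest_measurable_image[of ?G uniform01 "{A. det_alg x0 A}"] by blast
  show ?thesis
  proof (intro exI conjI allI)
    show "prob_space (distr uniform01 N ?G)"
      by (rule prob_space.prob_space_distr[OF prob_space_uniform01 N(2)])
    show "\<forall>A \<in> space (distr uniform01 N ?G). det_alg x0 A"
      using N(1) by simp
    fix \<rho>
    have "has_bochner_integral uniform01 (\<lambda>v. det_cost cost (?G v) \<rho>) (beh_exp_cost cost x0 m0 T \<rho>)"
      by (rule has_bochner_integral_det_cost_seed_alg[OF T])
    moreover from this have "(\<lambda>A. det_cost cost A \<rho>) \<in> borel_measurable N"
      by (intro meas borel_measurable_has_bochner_integral)
    ultimately show "has_bochner_integral (distr uniform01 N ?G) (\<lambda>A. det_cost cost A \<rho>)
        (beh_exp_cost cost x0 m0 T \<rho>)"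
      using N(2) by (intro has_bochner_integral_distr)
  qed
qed

section \<open>Mixed algorithms\<close>

locale mixed_algorithm =
  fixes cost :: "'x \<Rightarrow> 'r \<Rightarrow> 'x \<Rightarrow> real" and s0 :: 'x and m0 :: 'm
    and step :: "'x pmf \<times> 'm \<Rightarrow> 'r \<Rightarrow> ('x pmf \<times> 'm) pmf"
  assumes mixed_alg: "mixed_alg s0 m0 step"
begin

abbreviation reachable_states :: "('x pmf \<times> 'm) set" where
  "reachable_states \<equiv> reachable step (return_pmf s0, m0)"

lemma finite_set_pmf_step: "k \<in> reachable_states \<Longrightarrow> finite (set_pmf (step k r))"
  using mixed_alg unfolding mixed_alg_def by blast

lemma finite_set_pmf_fst: "k \<in> reachable_states \<Longrightarrow> finite (set_pmf (fst k))"
proof (induction rule: reachable.induct)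
  case start_rule
  then show ?case by simp
next
  case (step_rule k k' r)
  then show ?case using mixed_alg unfolding mixed_alg_def by blast
qed

definition admissible :: "('x pmf \<times> 'm) pmf \<Rightarrow> bool" where
  "admissible \<mu> \<longleftrightarrow> finite (set_pmf \<mu>) \<and> set_pmf \<mu> \<subseteq> reachable_states"

definition next_distr :: "('x pmf \<times> 'm) pmf \<Rightarrow> 'r \<Rightarrow> ('x pmf \<times> 'm) pmf" where
  "next_distr \<mu> r = bind_pmf \<mu> (\<lambda>k. step k r)"

lemma admissible_next_distr: "admissible \<mu> \<Longrightarrow> admissible (next_distr \<mu> r)"
  unfolding admissible_def next_distr_def
  using finite_set_pmf_step by (auto intro: reachable.step_rule)

lemma finite_set_pmf_mixture: "admissible \<mu> \<Longrightarrow> finite (set_pmf (bind_pmf \<mu> fst))"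
  unfolding admissible_def using finite_set_pmf_fst by auto

definition mixed_value :: "'x pmf \<times> 'm \<Rightarrow> 'r list \<Rightarrow> real" where
  "mixed_value k \<rho> = measure_pmf.expectation (chain step k \<rho>)
     (path_cost (\<lambda>k r k'. mixed_step_cost cost step k r) k \<rho>)"

lemma mixed_value_Cons:
  assumes "k \<in> reachable_states"
  shows "mixed_value k (r # rs) =
    mixed_step_cost cost step k r + measure_pmf.expectation (step k r) (\<lambda>k'. mixed_value k' rs)"
proof -
  have "finite (set_pmf (chain step k' rs))" if "k' \<in> reachable_states" for k'
    using that finite_set_pmf_step reachable.step_rule by (rule finite_set_pmf_chain)
  then show ?thesis
    using assms finite_set_pmf_step[OF assms] unfolding mixed_value_def
    by (subst expectation_path_cost_chain_Cons)
      (auto simp: integrable_measure_pmf_finite intro: reachable.step_rule)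
qed

text \<open>The memory of the distributional and behavioral algorithms is the law \<mu> of the current full
  state of the mixed algorithm. The case distinctions below only concern states off the actual runs;
  they make every transition finitely supported.\<close>

definition dist_step :: "'x pmf \<times> ('x pmf \<times> 'm) pmf \<Rightarrow> 'r \<Rightarrow> 'x pmf \<times> ('x pmf \<times> 'm) pmf" where
  "dist_step = (\<lambda>(_, \<mu>) r.
     (if finite (set_pmf (bind_pmf (next_distr \<mu> r) fst)) then bind_pmf (next_distr \<mu> r) fst
      else return_pmf s0, next_distr \<mu> r))"

lemma distributional_alg_dist_step: "distributional_alg dist_step"
  unfolding distributional_alg_def dist_step_def by auto

definition dist_value :: "('x pmf \<times> 'm) pmf \<Rightarrow> 'r list \<Rightarrow> real" where
  "dist_value \<mu> \<rho> = path_cost (\<lambda>k r k'. tcost cost (fst k) r (fst k')) (bind_pmf \<mu> fst, \<mu>) \<rho>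
     (drun dist_step (bind_pmf \<mu> fst, \<mu>) \<rho>)"

lemma dist_value_Nil: "dist_value \<mu> [] = 0"
  by (simp add: dist_value_def)

lemma dist_value_Cons:
  "admissible \<mu> \<Longrightarrow> dist_value \<mu> (r # rs) =
    tcost cost (bind_pmf \<mu> fst) r (bind_pmf (next_distr \<mu> r) fst) + dist_value (next_distr \<mu> r) rs"
  unfolding dist_value_def using finite_set_pmf_mixture[OF admissible_next_distr]
  by (simp add: dist_step_def)

lemma dist_value_le_mixed_value:
  "admissible \<mu> \<Longrightarrow> dist_value \<mu> \<rho> \<le> measure_pmf.expectation \<mu> (\<lambda>k. mixed_value k \<rho>)"
proof (induction \<rho> arbitrary: \<mu>)
  case Nil
  then show ?case by (simp add: dist_value_Nil mixed_value_def)
next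
  case (Cons r rs)
  have fin: "finite (set_pmf \<mu>)" and reach: "\<And>k. k \<in> set_pmf \<mu> \<Longrightarrow> k \<in> reachable_states"
    using Cons.prems unfolding admissible_def by auto
  have fin_fst: "finite (set_pmf (fst k))" if "k \<in> set_pmf \<mu>" for k
    using finite_set_pmf_fst reach that by blast
  have fin_next: "finite (set_pmf (bind_pmf (step k r) fst))" if "k \<in> set_pmf \<mu>" for k
    using finite_set_pmf_step[OF reach[OF that]] finite_set_pmf_fst reach[OF that]
    by (auto intro: reachable.step_rule)
  have "tcost cost (bind_pmf \<mu> fst) r (bind_pmf (next_distr \<mu> r) fst) =
      tcost cost (bind_pmf \<mu> fst) r (bind_pmf \<mu> (\<lambda>k. bind_pmf (step k r) fst))"
    by (simp add: next_distr_def bind_assoc_pmf)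
  also have "\<dots> \<le> measure_pmf.expectation \<mu> (\<lambda>k. mixed_step_cost cost step k r)"
    unfolding mixed_step_cost_def by (rule tcost_bind_pmf_le[OF fin fin_fst fin_next])
  finally have "tcost cost (bind_pmf \<mu> fst) r (bind_pmf (next_distr \<mu> r) fst) \<le>
      measure_pmf.expectation \<mu> (\<lambda>k. mixed_step_cost cost step k r)" .
  moreover have "dist_value (next_distr \<mu> r) rs \<le>
      measure_pmf.expectation \<mu> (\<lambda>k. measure_pmf.expectation (step k r) (\<lambda>k'. mixed_value k' rs))"
    using Cons.IH[OF admissible_next_distr[OF Cons.prems]] fin reach finite_set_pmf_step
    by (simp add: next_distr_def expectation_bind_pmf)
  ultimately have "dist_value \<mu> (r # rs) \<le> measure_pmf.expectation \<mu> (\<lambda>k.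
      mixed_step_cost cost step k r + measure_pmf.expectation (step k r) (\<lambda>k'. mixed_value k' rs))"
    using fin by (simp add: dist_value_Cons[OF Cons.prems] integrable_measure_pmf_finite)
  also have "\<dots> = measure_pmf.expectation \<mu> (\<lambda>k. mixed_value k (r # rs))"
    using reach by (intro expectation_cong_pmf) (simp add: mixed_value_Cons)
  finally show ?case .
qed

definition opt_coupling :: "('x pmf \<times> 'm) pmf \<Rightarrow> 'r \<Rightarrow> ('x \<times> 'x) pmf" where
  "opt_coupling \<mu> r = (SOME \<gamma>. coupling \<gamma> (bind_pmf \<mu> fst) (bind_pmf (next_distr \<mu> r) fst) \<and>
     measure_pmf.expectation \<gamma> (\<lambda>(x, y). cost x r y) =
       tcost cost (bind_pmf \<mu> fst) r (bind_pmf (next_distr \<mu> r) fst))"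

lemma opt_coupling:
  assumes "admissible \<mu>"
  shows "coupling (opt_coupling \<mu> r) (bind_pmf \<mu> fst) (bind_pmf (next_distr \<mu> r) fst)"
    "measure_pmf.expectation (opt_coupling \<mu> r) (\<lambda>(x, y). cost x r y) =
       tcost cost (bind_pmf \<mu> fst) r (bind_pmf (next_distr \<mu> r) fst)"
  using someI_ex[OF exists_coupling_attaining_tcost[OF finite_set_pmf_mixture[OF assms]
        finite_set_pmf_mixture[OF admissible_next_distr[OF assms]], where cost = cost and r = r]]
  unfolding opt_coupling_def by blast+

lemma finite_set_pmf_opt_coupling:
  assumes "admissible \<mu>"
  shows "finite (set_pmf (opt_coupling \<mu> r))"
  using set_pmf_coupling_subset[OF opt_coupling(1)[OF assms]] finite_set_pmf_mixture[OF assms]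
    finite_set_pmf_mixture[OF admissible_next_distr[OF assms]]
  by (meson finite_SigmaI finite_subset)

definition beh_step :: "'x \<times> ('x pmf \<times> 'm) pmf \<Rightarrow> 'r \<Rightarrow> ('x \<times> ('x pmf \<times> 'm) pmf) pmf" where
  "beh_step = (\<lambda>(x, \<mu>) r.
     if admissible \<mu> \<and> x \<in> set_pmf (bind_pmf \<mu> fst)
     then map_pmf (\<lambda>y. (y, next_distr \<mu> r))
       (map_pmf snd (cond_pmf (opt_coupling \<mu> r) {p. fst p = x}))
     else return_pmf (x, \<mu>))"

lemma opt_coupling_fst_nonempty:
  assumes "admissible \<mu>" "x \<in> set_pmf (bind_pmf \<mu> fst)"
  shows "set_pmf (opt_coupling \<mu> r) \<inter> {p. fst p = x} \<noteq> {}"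
proof -
  have "x \<in> set_pmf (map_pmf fst (opt_coupling \<mu> r))"
    using opt_coupling(1)[OF assms(1)] assms(2) unfolding coupling_def by simp
  then show ?thesis by auto
qed

lemma beh_step_eq:
  "admissible \<mu> \<Longrightarrow> x \<in> set_pmf (bind_pmf \<mu> fst) \<Longrightarrow> beh_step (x, \<mu>) r =
    map_pmf (\<lambda>y. (y, next_distr \<mu> r)) (map_pmf snd (cond_pmf (opt_coupling \<mu> r) {p. fst p = x}))"
  by (simp add: beh_step_def)

lemma behavioral_alg_beh_step: "behavioral_alg beh_step"
  unfolding behavioral_alg_def beh_step_def
  using set_cond_pmf[OF opt_coupling_fst_nonempty] finite_set_pmf_opt_coupling
  by (auto intro: finite_subset)

lemma expectation_beh_exp_cost_eq_dist_value:
  "admissible \<mu> \<Longrightarrow>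
    measure_pmf.expectation (bind_pmf \<mu> fst) (\<lambda>x. beh_exp_cost cost x \<mu> beh_step \<rho>) =
      dist_value \<mu> \<rho>"
proof (induction \<rho> arbitrary: \<mu>)
  case Nil
  then show ?case by (simp add: beh_exp_cost_def dist_value_Nil)
next
  case (Cons r rs)
  let ?\<gamma> = "opt_coupling \<mu> r" and ?\<mu>' = "next_distr \<mu> r"
  have \<gamma>: "map_pmf fst ?\<gamma> = bind_pmf \<mu> fst" "map_pmf snd ?\<gamma> = bind_pmf ?\<mu>' fst"
    using opt_coupling(1)[OF Cons.prems] unfolding coupling_def by auto
  have "measure_pmf.expectation (bind_pmf \<mu> fst) (\<lambda>x. beh_exp_cost cost x \<mu> beh_step (r # rs)) =
      measure_pmf.expectation (bind_pmf \<mu> fst) (\<lambda>x.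
        measure_pmf.expectation (map_pmf snd (cond_pmf ?\<gamma> {p. fst p = x}))
          (\<lambda>y. cost x r y + beh_exp_cost cost y ?\<mu>' beh_step rs))"
    using Cons.prems
    by (intro expectation_cong_pmf)
      (simp add: beh_exp_cost_Cons[OF behavioral_alg_beh_step] beh_step_eq)
  also have "\<dots> = measure_pmf.expectation ?\<gamma>
      (\<lambda>p. cost (fst p) r (snd p) + beh_exp_cost cost (snd p) ?\<mu>' beh_step rs)"
    using expectation_disintegrate_fst[OF finite_set_pmf_opt_coupling[OF Cons.prems, of r],
        where f = "\<lambda>x y. cost x r y + beh_exp_cost cost y ?\<mu>' beh_step rs"] \<gamma>(1) by simp
  also have "\<dots> = measure_pmf.expectation ?\<gamma> (\<lambda>(x, y). cost x r y) +
      measure_pmf.expectation (map_pmf snd ?\<gamma>) (\<lambda>y. beh_exp_cost cost y ?\<mu>' beh_step rs)"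
    using finite_set_pmf_opt_coupling[OF Cons.prems]
    by (simp add: case_prod_beta' integrable_measure_pmf_finite)
  also have "\<dots> = dist_value \<mu> (r # rs)"
    using opt_coupling(2)[OF Cons.prems] Cons.IH[OF admissible_next_distr[OF Cons.prems]] \<gamma>(2)
    by (simp add: dist_value_Cons[OF Cons.prems])
  finally show ?case .
qed

definition start_distr :: "('x pmf \<times> 'm) pmf" where
  "start_distr = return_pmf (return_pmf s0, m0)"

lemma admissible_start_distr: "admissible start_distr"
  by (simp add: admissible_def start_distr_def reachable.start_rule)

lemma dist_cost_le_mixed_exp_cost:
  "dist_cost cost s0 start_distr dist_step \<rho> \<le> mixed_exp_cost cost s0 m0 step \<rho>"
  using dist_value_le_mixed_value[OF admissible_start_distr, of \<rho>]
  by (simp add: dist_cost_def dist_value_def mixed_value_def mixed_exp_cost_def start_distr_def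
      bind_return_pmf)

lemma beh_exp_cost_le_mixed_exp_cost:
  "beh_exp_cost cost s0 start_distr beh_step \<rho> \<le> mixed_exp_cost cost s0 m0 step \<rho>"
  using expectation_beh_exp_cost_eq_dist_value[OF admissible_start_distr, of \<rho>]
    dist_cost_le_mixed_exp_cost[of \<rho>]
  by (simp add: start_distr_def dist_cost_def dist_value_def bind_return_pmf)

end

theorem mainTheorem2:
  fixes d :: "'x \<Rightarrow> 'x \<Rightarrow> real" and cost :: "'x \<Rightarrow> 'r \<Rightarrow> 'x \<Rightarrow> real" and s0 :: 'x
    and m0 :: 'm and step :: "'x pmf \<times> 'm \<Rightarrow> 'r \<Rightarrow> ('x pmf \<times> 'm) pmf"
  assumes "online_problem d cost" and "mixed_alg s0 m0 step"
  shows "(\<exists>M :: ('r list \<Rightarrow> 'x) measure.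
            prob_space M \<and> (\<forall>A \<in> space M. det_alg s0 A) \<and>
            (\<forall>\<rho>. integrable M (\<lambda>A. det_cost cost A \<rho>) \<and>
                 (\<integral>A. det_cost cost A \<rho> \<partial>M) \<le> mixed_exp_cost cost s0 m0 step \<rho>))
       \<and> (\<exists>(mb0 :: ('x pmf \<times> 'm) pmf) T. behavioral_alg T \<and>
            (\<forall>\<rho>. beh_exp_cost cost s0 mb0 T \<rho> \<le> mixed_exp_cost cost s0 m0 step \<rho>))
       \<and> (\<exists>(md0 :: ('x pmf \<times> 'm) pmf) F. distributional_alg F \<and>
            (\<forall>\<rho>. dist_cost cost s0 md0 F \<rho> \<le> mixed_exp_cost cost s0 m0 step \<rho>))"
proof -
  interpret mixed_algorithm cost s0 m0 step
    by unfold_locales (fact assms(2))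
  obtain M :: "('r list \<Rightarrow> 'x) measure" where M: "prob_space M" "\<forall>A \<in> space M. det_alg s0 A"
    and integral_M: "\<And>\<rho>. has_bochner_integral M (\<lambda>A. det_cost cost A \<rho>)
      (beh_exp_cost cost s0 start_distr beh_step \<rho>)"
    using behavioral_alg_as_random_det_alg[OF behavioral_alg_beh_step] by blast
  have "integrable M (\<lambda>A. det_cost cost A \<rho>) \<and>
      (\<integral>A. det_cost cost A \<rho> \<partial>M) \<le> mixed_exp_cost cost s0 m0 step \<rho>" for \<rho>
    using integral_M[of \<rho>] beh_exp_cost_le_mixed_exp_cost[of \<rho>]
    by (simp add: has_bochner_integral_iff)
  then show ?thesis
    using M behavioral_alg_beh_step beh_exp_cost_le_mixed_exp_cost
      distributional_alg_dist_step dist_cost_le_mixed_exp_cost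
    by (intro conjI exI[of _ M] exI[of _ start_distr] exI[of _ beh_step] exI[of _ dist_step]) auto
qed

end
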